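(* Assume (A1) and fix all parameters $A,c,\gamma,\omega,h,d,\sigma,\mu,F^*$ and $b$. Let $\mathcal{B}=\{\beta>0:\ \text{conditions (C1)--(C4) hold with } E=\mu\sigma(1-2b^2\beta)\}$. Then $\mathcal{B}$ is either empty or an open interval $(\beta_a,\beta_b)$ with $0\le\beta_a<\beta_b\le 1/(2b^2)$; in particular $\mathcal{B}\ne(0,+\infty)$. Each of the three possibilities — $\mathcal{B}=\emptyset$ ("neutral", unconditionally unstable), $\mathcal{B}=(0,\beta_b)$ ("destabilizing"), and $\mathcal{B}=(\beta_a,\beta_b)$ with $\beta_a>0$ ("mixed") — occurs for suitable values of the fixed parameters satisfying (A1). The same statement holds with the roles of $\beta$ and $b$ exchanged: fixing $\beta$, the set $\{b>0: \text{(C1)--(C4) hold}\}$ is empty or an open interval $(b_a,b_b)$ with $0\le b_a<b_b\le 1/\sqrt{2\beta}$, and the three possibilities all occur.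
   Context: Parameters: $c\in(0,1)$, $\gamma>0$, $\omega\in[0,1]$, $h>0$, $d>0$, $\sigma>0$, $\mu>0$, $b>0$, $\beta>0$ (also $A>0,F^*>0$, which do not enter the conditions). Assumption (A1): $1-c-hd>0$. For a real number $E$, conditions (C1)--(C4) are: (C1) $E>0$ (equivalently, when $E=\mu\sigma(1-2b^2\beta)$, $2b^2\beta-1<0$); (C2) $(2-E)(1+c+2\gamma)-\omega^2dhE>0$; (C3) $1-c+cE+\omega^2dhE+\gamma c-E\gamma-E\gamma c+E^2\gamma-E^2\gamma^2+E\gamma^2-\gamma>0$; (C4) $2\gamma+c-cE-\gamma E-\omega^2dhE<3$. These are the conditions guaranteeing that all eigenvalues of the Jacobian matrix $\begin{pmatrix}c+\gamma&\omega h&-\gamma\\ \omega dE&1-E&0\\1&0&0\end{pmatrix}$ (the Jacobian, at the unbiased steady state $S^*$, of the model map) lie in the open unit disk. *)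

theory Defs
  imports Complex_Main
begin

text \<open>Standing parameter constraints, including assumption (A1): 1 - c - h d > 0.\<close>
definition params_ok :: "real \<Rightarrow> real \<Rightarrow> real \<Rightarrow> real \<Rightarrow> real \<Rightarrow> real \<Rightarrow> real \<Rightarrow> bool" where
  "params_ok c \<gamma> \<omega> h d \<sigma> \<mu> \<longleftrightarrow>
     0 < c \<and> c < 1 \<and> 0 < \<gamma> \<and> 0 \<le> \<omega> \<and> \<omega> \<le> 1 \<and> 0 < h \<and> 0 < d \<and> 0 < \<sigma> \<and> 0 < \<mu>
     \<and> 1 - c - h * d > 0"

definition C1 :: "real \<Rightarrow> bool" where
  "C1 E \<longleftrightarrow> E > 0"

definition C2 :: "real \<Rightarrow> real \<Rightarrow> real \<Rightarrow> real \<Rightarrow> real \<Rightarrow> real \<Rightarrow> bool" where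
  "C2 c \<gamma> \<omega> h d E \<longleftrightarrow> (2 - E) * (1 + c + 2 * \<gamma>) - \<omega>^2 * d * h * E > 0"

definition C3 :: "real \<Rightarrow> real \<Rightarrow> real \<Rightarrow> real \<Rightarrow> real \<Rightarrow> real \<Rightarrow> bool" where
  "C3 c \<gamma> \<omega> h d E \<longleftrightarrow>
     1 - c + c * E + \<omega>^2 * d * h * E + \<gamma> * c - E * \<gamma> - E * \<gamma> * c + E^2 * \<gamma>
       - E^2 * \<gamma>^2 + E * \<gamma>^2 - \<gamma> > 0"

definition C4 :: "real \<Rightarrow> real \<Rightarrow> real \<Rightarrow> real \<Rightarrow> real \<Rightarrow> real \<Rightarrow> bool" where
  "C4 c \<gamma> \<omega> h d E \<longleftrightarrow> 2 * \<gamma> + c - c * E - \<gamma> * E - \<omega>^2 * d * h * E < 3"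

definition conds :: "real \<Rightarrow> real \<Rightarrow> real \<Rightarrow> real \<Rightarrow> real \<Rightarrow> real \<Rightarrow> bool" where
  "conds c \<gamma> \<omega> h d E \<longleftrightarrow> C1 E \<and> C2 c \<gamma> \<omega> h d E \<and> C3 c \<gamma> \<omega> h d E \<and> C4 c \<gamma> \<omega> h d E"

definition Eval :: "real \<Rightarrow> real \<Rightarrow> real \<Rightarrow> real \<Rightarrow> real" where
  "Eval \<sigma> \<mu> b \<beta> = \<mu> * \<sigma> * (1 - 2 * b^2 * \<beta>)"

definition beta_set :: "real \<Rightarrow> real \<Rightarrow> real \<Rightarrow> real \<Rightarrow> real \<Rightarrow> real \<Rightarrow> real \<Rightarrow> real \<Rightarrow> real set" where
  "beta_set c \<gamma> \<omega> h d \<sigma> \<mu> b = {\<beta>. \<beta> > 0 \<and> conds c \<gamma> \<omega> h d (Eval \<sigma> \<mu> b \<beta>)}"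

definition b_set :: "real \<Rightarrow> real \<Rightarrow> real \<Rightarrow> real \<Rightarrow> real \<Rightarrow> real \<Rightarrow> real \<Rightarrow> real \<Rightarrow> real set" where
  "b_set c \<gamma> \<omega> h d \<sigma> \<mu> \<beta> = {b. b > 0 \<and> conds c \<gamma> \<omega> h d (Eval \<sigma> \<mu> b \<beta>)}"

end

theory Submission
  imports Defs "HOL-Analysis.Analysis"
begin

text \<open>
  Conditions (C1), (C2), (C4) are linear in \<open>E\<close> and (C3) is quadratic: for \<open>\<gamma> < 1\<close> it holds
  for every \<open>E > 0\<close>, and for \<open>\<gamma> \<ge> 1\<close> the quadratic is concave. Hence the admissible values of
  \<open>E\<close> form an open interval inside \<open>(0, \<infinity>)\<close>. Both \<open>\<beta> \<mapsto> E\<close> and \<open>b \<mapsto> E\<close> are continuous and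
  decreasing on \<open>(0, \<infinity>)\<close>, so the admissible \<open>\<beta>\<close> (resp. \<open>b\<close>) again form an open interval,
  which ends before the zero of \<open>E\<close> at \<open>1/(2b\<^sup>2)\<close> (resp. \<open>1/\<surd>(2\<beta>)\<close>). Explicit parameter
  values, for which the conditions reduce to \<open>0 < E < 2\<close> or fail identically, realize all three
  cases.
\<close>

lemma open_is_interval_eq_Inf_Sup:
  fixes T :: "real set"
  assumes "open T" "is_interval T" "T \<noteq> {}" "bdd_below T" "bdd_above T"
  shows "T = {Inf T<..<Sup T}"
proof
  show "T \<subseteq> {Inf T<..<Sup T}"
  proof
    fix x assume "x \<in> T"
    then obtain e where "e > 0" "ball x e \<subseteq> T"
      using \<open>open T\<close> openE by blast
    then have "x - e/2 \<in> T" "x + e/2 \<in> T"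
      by (auto simp: dist_real_def)
    then have "Inf T \<le> x - e/2" "x + e/2 \<le> Sup T"
      using assms(4,5) by (auto intro: cInf_lower cSup_upper)
    then show "x \<in> {Inf T<..<Sup T}"
      using \<open>e > 0\<close> by simp
  qed
  show "{Inf T<..<Sup T} \<subseteq> T"
  proof
    fix y assume "y \<in> {Inf T<..<Sup T}"
    then obtain x z where "x \<in> T" "x < y" "z \<in> T" "y < z"
      using assms(3-5) by (auto simp: cInf_less_iff less_cSup_iff)
    then show "y \<in> T"
      using \<open>is_interval T\<close> unfolding is_interval_1 by (meson less_imp_le)
  qed
qed

lemma is_interval_Int_vimage_antimono_on:
  fixes f :: "real \<Rightarrow> real"
  assumes "is_interval I" "is_interval S" "antimono_on I f"
  shows "is_interval (I \<inter> f -` S)"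
  unfolding is_interval_1
proof (intro ballI allI impI)
  fix x z y
  assume x: "x \<in> I \<inter> f -` S" and z: "z \<in> I \<inter> f -` S" and "x \<le> y \<and> y \<le> z"
  then have "y \<in> I"
    using assms(1) unfolding is_interval_1 by blast
  then have "f z \<le> f y" "f y \<le> f x"
    using x z \<open>x \<le> y \<and> y \<le> z\<close> assms(3) by (auto dest: monotone_onD)
  then have "f y \<in> S"
    using x z assms(2) unfolding is_interval_1 by blast
  with \<open>y \<in> I\<close> show "y \<in> I \<inter> f -` S"
    by blast
qed

lemma antimono_vimage_interval_cases:
  fixes f :: "real \<Rightarrow> real" and S :: "real set"
  assumes S: "open S" "is_interval S" "S \<subseteq> {0<..}"
    and f: "continuous_on {0<..} f" "antimono_on {0<..} f"
    and M: "0 < M" "\<And>x. 0 < x \<Longrightarrow> 0 < f x \<Longrightarrow> x < M"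
  shows "({0<..} \<inter> f -` S = {} \<or>
          (\<exists>a b. 0 \<le> a \<and> a < b \<and> b \<le> M \<and> {0<..} \<inter> f -` S = {a<..<b}))
         \<and> {0<..} \<inter> f -` S \<noteq> {0<..}"
proof -
  define T where "T = {0<..} \<inter> f -` S"
  have bounds: "0 < x \<and> x < M" if "x \<in> T" for x
    using that S(3) M(2) unfolding T_def by auto
  have T: "open T" "is_interval T" "bdd_below T" "bdd_above T"
  proof -
    show "open T"
      using f(1) S(1) unfolding T_def continuous_on_open_vimage[OF open_greaterThan]
      by (simp add: Int_commute)
    show "is_interval T"
      unfolding T_def by (rule is_interval_Int_vimage_antimono_on) (use S f in auto)
    show "bdd_below T" "bdd_above T"
      using bounds by (meson bdd_belowI bdd_aboveI less_imp_le)+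
  qed
  have "T = {} \<or> (0 \<le> Inf T \<and> Inf T < Sup T \<and> Sup T \<le> M \<and> T = {Inf T<..<Sup T})"
  proof (cases "T = {}")
    case False
    then have "T = {Inf T<..<Sup T}"
      using open_is_interval_eq_Inf_Sup[OF T(1,2) _ T(3,4)] by blast
    moreover have "0 \<le> Inf T" "Sup T \<le> M"
      using False bounds by (meson cInf_greatest cSup_least less_imp_le)+
    ultimately show ?thesis
      using False by (metis greaterThanLessThan_empty_iff not_less)
  qed simp
  moreover have "M \<notin> T"
    using bounds by blast
  ultimately show ?thesis
    using \<open>0 < M\<close> unfolding T_def by auto
qed

lemma C2_iff: "C2 c \<gamma> \<omega> h d E \<longleftrightarrow> E * (1 + c + 2 * \<gamma> + \<omega>^2 * d * h) < 2 * (1 + c + 2 * \<gamma>)"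
  unfolding C2_def by (simp add: algebra_simps)

lemma C4_iff: "C4 c \<gamma> \<omega> h d E \<longleftrightarrow> 2 * \<gamma> + c - 3 < E * (c + \<gamma> + \<omega>^2 * d * h)"
  unfolding C4_def by (simp add: algebra_simps)

lemma C3_iff:
  "C3 c \<gamma> \<omega> h d E \<longleftrightarrow>
     0 < (1 - c) * (1 - \<gamma>) + E * ((1 - \<gamma>) * (c - \<gamma>) + \<omega>^2 * d * h) + E^2 * (\<gamma> * (1 - \<gamma>))"
  unfolding C3_def by (simp add: algebra_simps power2_eq_square)

lemma quadratic_pos_of_discrim_neg:
  fixes a B C y :: real
  assumes "0 < a" "B^2 < 4 * a * C"
  shows "0 < a * y^2 + B * y + C"
proof -
  have "4 * a * (a * y^2 + B * y + C) = (2 * a * y + B)^2 + (4 * a * C - B^2)"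
    by (simp add: power2_eq_square algebra_simps)
  also have "\<dots> > 0"
    using assms(2) by (smt (verit) zero_le_power2)
  finally show ?thesis
    using \<open>0 < a\<close> by (simp add: zero_less_mult_iff)
qed

lemma C3_quadratic_pos:
  fixes c g k y :: real
  assumes "0 < c" "c < 1" "0 < g" "g < 1" "0 \<le> k" "0 < y"
  shows "0 < (1 - c) * (1 - g) + y * ((1 - g) * (c - g) + k) + y^2 * (g * (1 - g))"
proof (cases "0 \<le> (1 - g) * (c - g) + k")
  case True
  then show ?thesis
    using assms by (simp add: add_pos_nonneg)
next
  case False
  define B where "B = (1 - g) * (c - g) + k"
  have "c < g"
    using False assms by (smt (verit) mult_nonneg_nonneg)
  have gc: "(g - c)^2 < 4 * g * (1 - c)"
    unfolding power2_eq_square using \<open>c < g\<close> assms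
    by (smt (verit) mult_strict_mono mult.commute)
  have "B^2 \<le> ((1 - g) * (g - c))^2"
    using False assms unfolding B_def
    by (intro power2_le_iff_abs_le[THEN iffD2]) (auto simp: algebra_simps)
  then have "B^2 \<le> (1 - g)^2 * (g - c)^2"
    by (simp add: power_mult_distrib)
  also have "\<dots> < (1 - g)^2 * (4 * g * (1 - c))"
    using gc assms by (intro mult_strict_left_mono) auto
  also have "\<dots> = 4 * (g * (1 - g)) * ((1 - c) * (1 - g))"
    by (simp add: power2_eq_square algebra_simps)
  finally have "B^2 < 4 * (g * (1 - g)) * ((1 - c) * (1 - g))" .
  then show ?thesis
    using quadratic_pos_of_discrim_neg[of "g * (1 - g)" B "(1 - c) * (1 - g)" y] assms
    unfolding B_def by (simp add: algebra_simps)
qed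

lemma C3_between:
  assumes p: "params_ok c \<gamma> \<omega> h d \<sigma> \<mu>" and "0 < x" "x < y" "y < z"
    and "C3 c \<gamma> \<omega> h d x" "C3 c \<gamma> \<omega> h d z"
  shows "C3 c \<gamma> \<omega> h d y"
proof -
  define q where
    "q E = (1 - c) * (1 - \<gamma>) + E * ((1 - \<gamma>) * (c - \<gamma>) + \<omega>^2 * d * h) + E^2 * (\<gamma> * (1 - \<gamma>))"
    for E
  have C3_q: "C3 c \<gamma> \<omega> h d E \<longleftrightarrow> 0 < q E" for E
    unfolding C3_iff q_def ..
  show ?thesis
  proof (cases "\<gamma> < 1")
    case True
    have c: "0 < c" "c < 1" and "0 < \<gamma>" and k: "0 \<le> \<omega>^2 * d * h"
      using p unfolding params_ok_def by auto
    have "0 < y"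
      using assms by linarith
    show ?thesis
      unfolding C3_iff by (rule C3_quadratic_pos[OF c \<open>0 < \<gamma>\<close> True k \<open>0 < y\<close>])
  next
    case False
    have "q y * (z - x) = (z - y) * q x + (y - x) * q z + (\<gamma> * (\<gamma> - 1)) * ((y - x) * (z - y) * (z - x))"
      unfolding q_def power2_eq_square by algebra
    moreover have "0 < (z - y) * q x" "0 < (y - x) * q z"
      using assms C3_q by auto
    moreover have "0 \<le> (\<gamma> * (\<gamma> - 1)) * ((y - x) * (z - y) * (z - x))"
      using False p assms unfolding params_ok_def by simp
    ultimately have "0 < q y * (z - x)"
      by linarith
    then show ?thesis
      using assms C3_q by (simp add: zero_less_mult_iff)
  qed
qed

lemma is_interval_conds:
  assumes p: "params_ok c \<gamma> \<omega> h d \<sigma> \<mu>"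
  shows "is_interval {E. conds c \<gamma> \<omega> h d E}"
  unfolding is_interval_1
proof (intro ballI allI impI)
  fix x y z
  assume "x \<in> {E. conds c \<gamma> \<omega> h d E}" "z \<in> {E. conds c \<gamma> \<omega> h d E}" "x \<le> y \<and> y \<le> z"
  then have x: "C1 x" "C3 c \<gamma> \<omega> h d x" "C4 c \<gamma> \<omega> h d x"
    and z: "C2 c \<gamma> \<omega> h d z" "C3 c \<gamma> \<omega> h d z" and "x \<le> y" "y \<le> z"
    unfolding conds_def by auto
  have k: "0 \<le> \<omega>^2 * d * h" and "0 < c" "0 < \<gamma>"
    using p unfolding params_ok_def by auto
  have "C1 y"
    using x(1) \<open>x \<le> y\<close> unfolding C1_def by simp
  moreover have "C2 c \<gamma> \<omega> h d y"
    using z(1) \<open>y \<le> z\<close> mult_right_mono[of y z "1 + c + 2 * \<gamma> + \<omega>^2 * d * h"] k \<open>0 < c\<close> \<open>0 < \<gamma>\<close>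
    unfolding C2_iff by linarith
  moreover have "C3 c \<gamma> \<omega> h d y"
    using C3_between[OF p] x z \<open>x \<le> y\<close> \<open>y \<le> z\<close> \<open>C1 x\<close> unfolding C1_def
    by (metis order_le_less)
  moreover have "C4 c \<gamma> \<omega> h d y"
    using x(3) \<open>x \<le> y\<close> mult_right_mono[of x y "c + \<gamma> + \<omega>^2 * d * h"] k \<open>0 < c\<close> \<open>0 < \<gamma>\<close>
    unfolding C4_iff by linarith
  ultimately show "y \<in> {E. conds c \<gamma> \<omega> h d E}"
    unfolding conds_def by simp
qed

lemma open_conds: "open {E. conds c \<gamma> \<omega> h d E}"
  unfolding conds_def C1_def C2_def C3_def C4_def
  by (intro open_Collect_conj open_Collect_less continuous_intros)

lemma conds_pos: "{E. conds c \<gamma> \<omega> h d E} \<subseteq> {0<..}"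
  unfolding conds_def C1_def by auto

lemma beta_set_eq_vimage:
  "beta_set c \<gamma> \<omega> h d \<sigma> \<mu> b = {0<..} \<inter> Eval \<sigma> \<mu> b -` {E. conds c \<gamma> \<omega> h d E}"
  unfolding beta_set_def by auto

lemma b_set_eq_vimage:
  "b_set c \<gamma> \<omega> h d \<sigma> \<mu> \<beta> = {0<..} \<inter> (\<lambda>b. Eval \<sigma> \<mu> b \<beta>) -` {E. conds c \<gamma> \<omega> h d E}"
  unfolding b_set_def by auto

lemma beta_set_cases:
  assumes p: "params_ok c \<gamma> \<omega> h d \<sigma> \<mu>" and "0 < b"
  shows "(beta_set c \<gamma> \<omega> h d \<sigma> \<mu> b = {} \<or>
          (\<exists>\<beta>a \<beta>b. 0 \<le> \<beta>a \<and> \<beta>a < \<beta>b \<and> \<beta>b \<le> 1 / (2 * b^2) \<and>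
                    beta_set c \<gamma> \<omega> h d \<sigma> \<mu> b = {\<beta>a<..<\<beta>b}))
         \<and> beta_set c \<gamma> \<omega> h d \<sigma> \<mu> b \<noteq> {0<..}"
  unfolding beta_set_eq_vimage
proof (rule antimono_vimage_interval_cases[OF open_conds is_interval_conds[OF p] conds_pos])
  have "0 < \<mu> * \<sigma>"
    using p unfolding params_ok_def by simp
  show "continuous_on {0<..} (Eval \<sigma> \<mu> b)"
    unfolding Eval_def by (intro continuous_intros)
  show "antimono_on {0<..} (Eval \<sigma> \<mu> b)"
    using \<open>0 < \<mu> * \<sigma>\<close> by (intro monotone_onI) (auto simp: Eval_def intro!: mult_left_mono)
  show "0 < 1 / (2 * b^2)"
    using \<open>0 < b\<close> by simp
  show "\<beta> < 1 / (2 * b^2)" if "0 < Eval \<sigma> \<mu> b \<beta>" for \<beta>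
    using that \<open>0 < \<mu> * \<sigma>\<close> \<open>0 < b\<close> by (auto simp: Eval_def zero_less_mult_iff field_simps)
qed

lemma b_set_cases:
  assumes p: "params_ok c \<gamma> \<omega> h d \<sigma> \<mu>" and "0 < \<beta>"
  shows "(b_set c \<gamma> \<omega> h d \<sigma> \<mu> \<beta> = {} \<or>
          (\<exists>ba bb. 0 \<le> ba \<and> ba < bb \<and> bb \<le> 1 / sqrt (2 * \<beta>) \<and>
                    b_set c \<gamma> \<omega> h d \<sigma> \<mu> \<beta> = {ba<..<bb}))
         \<and> b_set c \<gamma> \<omega> h d \<sigma> \<mu> \<beta> \<noteq> {0<..}"
  unfolding b_set_eq_vimage
proof (rule antimono_vimage_interval_cases[OF open_conds is_interval_conds[OF p] conds_pos])
  have "0 < \<mu> * \<sigma>"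
    using p unfolding params_ok_def by simp
  show "continuous_on {0<..} (\<lambda>b. Eval \<sigma> \<mu> b \<beta>)"
    unfolding Eval_def by (intro continuous_intros)
  show "antimono_on {0<..} (\<lambda>b. Eval \<sigma> \<mu> b \<beta>)"
    using \<open>0 < \<mu> * \<sigma>\<close> \<open>0 < \<beta>\<close>
    by (intro monotone_onI) (auto simp: Eval_def intro!: mult_left_mono power_mono)
  show "0 < 1 / sqrt (2 * \<beta>)"
    using \<open>0 < \<beta>\<close> by simp
  show "b < 1 / sqrt (2 * \<beta>)" if "0 < b" "0 < Eval \<sigma> \<mu> b \<beta>" for b
  proof -
    have "b^2 < 1 / (2 * \<beta>)"
      using that \<open>0 < \<mu> * \<sigma>\<close> \<open>0 < \<beta>\<close> by (auto simp: Eval_def zero_less_mult_iff field_simps)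
    then have "b < sqrt (1 / (2 * \<beta>))"
      by (rule real_less_rsqrt)
    then show ?thesis
      by (simp add: real_sqrt_divide)
  qed
qed

lemma params_ok_example: "0 < \<gamma> \<Longrightarrow> 0 < \<mu> \<Longrightarrow> params_ok (1/2) \<gamma> 0 (1/4) 1 1 \<mu>"
  unfolding params_ok_def by simp

lemma conds_example_iff: "conds (1/2) (1/2) 0 (1/4) 1 E \<longleftrightarrow> 0 < E \<and> E < 2"
  unfolding conds_def C1_def C2_def C3_def C4_def
  by (auto simp: algebra_simps power2_eq_square add_pos_nonneg)

text \<open>Here the left-hand side of (C3) vanishes identically.\<close>
lemma not_conds_example: "\<not> conds (1/2) 1 0 (1/4) 1 E"
  unfolding conds_def C3_def by (simp add: algebra_simps power2_eq_square)

lemma beta_set_neutral_occurs: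
  "\<exists>c \<gamma> \<omega> h d \<sigma> \<mu> b. params_ok c \<gamma> \<omega> h d \<sigma> \<mu> \<and> b > 0 \<and> beta_set c \<gamma> \<omega> h d \<sigma> \<mu> b = {}"
proof -
  have "beta_set (1/2) 1 0 (1/4) 1 1 1 1 = {}"
    unfolding beta_set_def using not_conds_example by auto
  moreover have "params_ok (1/2) 1 0 (1/4) 1 1 1" "(1::real) > 0"
    by (simp_all add: params_ok_example)
  ultimately show ?thesis
    by blast
qed

lemma beta_set_destabilizing_occurs:
  "\<exists>c \<gamma> \<omega> h d \<sigma> \<mu> b \<beta>b. params_ok c \<gamma> \<omega> h d \<sigma> \<mu> \<and> b > 0 \<and> 0 < \<beta>b \<and>
     beta_set c \<gamma> \<omega> h d \<sigma> \<mu> b = {0<..<\<beta>b}"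
proof -
  have "beta_set (1/2) (1/2) 0 (1/4) 1 1 1 1 = {0<..<1/2}"
    unfolding beta_set_def conds_example_iff Eval_def by auto
  moreover have "params_ok (1/2) (1/2) 0 (1/4) 1 1 1" "(1::real) > 0" "(0::real) < 1/2"
    by (simp_all add: params_ok_example)
  ultimately show ?thesis
    by blast
qed

lemma beta_set_mixed_occurs:
  "\<exists>c \<gamma> \<omega> h d \<sigma> \<mu> b \<beta>a \<beta>b. params_ok c \<gamma> \<omega> h d \<sigma> \<mu> \<and> b > 0 \<and> 0 < \<beta>a \<and> \<beta>a < \<beta>b \<and>
     beta_set c \<gamma> \<omega> h d \<sigma> \<mu> b = {\<beta>a<..<\<beta>b}"
proof -
  have "beta_set (1/2) (1/2) 0 (1/4) 1 1 3 1 = {1/6<..<1/2}"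
    unfolding beta_set_def conds_example_iff Eval_def by auto
  moreover have "params_ok (1/2) (1/2) 0 (1/4) 1 1 3" "(1::real) > 0" "(0::real) < 1/6" "(1/6::real) < 1/2"
    by (simp_all add: params_ok_example)
  ultimately show ?thesis
    by blast
qed

lemma b_set_neutral_occurs:
  "\<exists>c \<gamma> \<omega> h d \<sigma> \<mu> \<beta>. params_ok c \<gamma> \<omega> h d \<sigma> \<mu> \<and> \<beta> > 0 \<and> b_set c \<gamma> \<omega> h d \<sigma> \<mu> \<beta> = {}"
proof -
  have "b_set (1/2) 1 0 (1/4) 1 1 1 (1/2) = {}"
    unfolding b_set_def using not_conds_example by auto
  moreover have "params_ok (1/2) 1 0 (1/4) 1 1 1" "(1/2::real) > 0"
    by (simp_all add: params_ok_example)
  ultimately show ?thesis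
    by blast
qed

lemma b_set_destabilizing_occurs:
  "\<exists>c \<gamma> \<omega> h d \<sigma> \<mu> \<beta> bb. params_ok c \<gamma> \<omega> h d \<sigma> \<mu> \<and> \<beta> > 0 \<and> 0 < bb \<and>
     b_set c \<gamma> \<omega> h d \<sigma> \<mu> \<beta> = {0<..<bb}"
proof -
  have "b_set (1/2) (1/2) 0 (1/4) 1 1 1 (1/2) = {0<..<1}"
    unfolding b_set_def conds_example_iff Eval_def
    by (auto simp: power_less_one_iff) (smt (verit) zero_le_power2)
  moreover have "params_ok (1/2) (1/2) 0 (1/4) 1 1 1" "(1/2::real) > 0" "(0::real) < 1"
    by (simp_all add: params_ok_example)
  ultimately show ?thesis
    by blast
qed

lemma b_set_mixed_occurs:
  "\<exists>c \<gamma> \<omega> h d \<sigma> \<mu> \<beta> ba bb. params_ok c \<gamma> \<omega> h d \<sigma> \<mu> \<and> \<beta> > 0 \<and> 0 < ba \<and> ba < bb \<and>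
     b_set c \<gamma> \<omega> h d \<sigma> \<mu> \<beta> = {ba<..<bb}"
proof -
  have "0 < b \<Longrightarrow> 1/4 < b^2 \<longleftrightarrow> 1/2 < b" for b :: real
    using power_mono_iff[of b "1/2" 2] by (auto simp: power_divide not_le[symmetric])
  then have "b_set (1/2) (1/2) 0 (1/4) 1 1 (8/3) (1/2) = {1/2<..<1}"
    unfolding b_set_def conds_example_iff Eval_def by (auto simp: power_less_one_iff field_simps)
  moreover have "params_ok (1/2) (1/2) 0 (1/4) 1 1 (8/3)" "(1/2::real) > 0" "(0::real) < 1/2" "(1/2::real) < 1"
    by (simp_all add: params_ok_example)
  ultimately show ?thesis
    by blast
qed

theorem proposition5:
  shows
  "(\<forall>c \<gamma> \<omega> h d \<sigma> \<mu> b. params_ok c \<gamma> \<omega> h d \<sigma> \<mu> \<and> b > 0 \<longrightarrow>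
      (beta_set c \<gamma> \<omega> h d \<sigma> \<mu> b = {} \<or>
       (\<exists>\<beta>a \<beta>b. 0 \<le> \<beta>a \<and> \<beta>a < \<beta>b \<and> \<beta>b \<le> 1 / (2 * b^2) \<and>
                 beta_set c \<gamma> \<omega> h d \<sigma> \<mu> b = {\<beta>a<..<\<beta>b}))
      \<and> beta_set c \<gamma> \<omega> h d \<sigma> \<mu> b \<noteq> {0<..})
   \<and> (\<exists>c \<gamma> \<omega> h d \<sigma> \<mu> b. params_ok c \<gamma> \<omega> h d \<sigma> \<mu> \<and> b > 0 \<and>
        beta_set c \<gamma> \<omega> h d \<sigma> \<mu> b = {})
   \<and> (\<exists>c \<gamma> \<omega> h d \<sigma> \<mu> b \<beta>b. params_ok c \<gamma> \<omega> h d \<sigma> \<mu> \<and> b > 0 \<and> 0 < \<beta>b \<and>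
        beta_set c \<gamma> \<omega> h d \<sigma> \<mu> b = {0<..<\<beta>b})
   \<and> (\<exists>c \<gamma> \<omega> h d \<sigma> \<mu> b \<beta>a \<beta>b. params_ok c \<gamma> \<omega> h d \<sigma> \<mu> \<and> b > 0 \<and> 0 < \<beta>a \<and> \<beta>a < \<beta>b \<and>
        beta_set c \<gamma> \<omega> h d \<sigma> \<mu> b = {\<beta>a<..<\<beta>b})
   \<and> (\<forall>c \<gamma> \<omega> h d \<sigma> \<mu> \<beta>. params_ok c \<gamma> \<omega> h d \<sigma> \<mu> \<and> \<beta> > 0 \<longrightarrow>
      (b_set c \<gamma> \<omega> h d \<sigma> \<mu> \<beta> = {} \<or>
       (\<exists>ba bb. 0 \<le> ba \<and> ba < bb \<and> bb \<le> 1 / sqrt (2 * \<beta>) \<and>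
                 b_set c \<gamma> \<omega> h d \<sigma> \<mu> \<beta> = {ba<..<bb}))
      \<and> b_set c \<gamma> \<omega> h d \<sigma> \<mu> \<beta> \<noteq> {0<..})
   \<and> (\<exists>c \<gamma> \<omega> h d \<sigma> \<mu> \<beta>. params_ok c \<gamma> \<omega> h d \<sigma> \<mu> \<and> \<beta> > 0 \<and>
        b_set c \<gamma> \<omega> h d \<sigma> \<mu> \<beta> = {})
   \<and> (\<exists>c \<gamma> \<omega> h d \<sigma> \<mu> \<beta> bb. params_ok c \<gamma> \<omega> h d \<sigma> \<mu> \<and> \<beta> > 0 \<and> 0 < bb \<and>
        b_set c \<gamma> \<omega> h d \<sigma> \<mu> \<beta> = {0<..<bb})
   \<and> (\<exists>c \<gamma> \<omega> h d \<sigma> \<mu> \<beta> ba bb. params_ok c \<gamma> \<omega> h d \<sigma> \<mu> \<and> \<beta> > 0 \<and> 0 < ba \<and> ba < bb \<and>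
        b_set c \<gamma> \<omega> h d \<sigma> \<mu> \<beta> = {ba<..<bb})"
  by (intro conjI allI impI beta_set_cases b_set_cases beta_set_neutral_occurs
      beta_set_destabilizing_occurs beta_set_mixed_occurs b_set_neutral_occurs
      b_set_destabilizing_occurs b_set_mixed_occurs; elim conjE)

end
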